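(* Let $F$ be a semi-safe sentence and let $\mathbf c$ be a finite set of object constants containing every object constant occurring in $F$. Then $F$ entails $F^*(\mathbf e_{\mathbf c})$.
   Context: Formulas are first-order formulas with object constants, predicate constants and equality but no function constants of arity $>0$; primitive connectives are $\bot,\land,\lor,\rightarrow$ and quantifiers $\forall,\exists$ ($\neg F$ is $F\rightarrow\bot$, $\top$ is $\bot\rightarrow\bot$). A sentence is a formula without free variables. Let $\mathbf p=p_1,\dots,p_n$ be the predicate constants occurring in $F$ and $\mathbf u=u_1,\dots,u_n$ predicate variables of matching arities. $F^*(\mathbf u)$ is defined recursively: $p_i(\mathbf t)^*=u_i(\mathbf t)$; $(t_1=t_2)^*=(t_1=t_2)$; $\bot^*=\bot$; $(G\land H)^*=G^*\land H^*$; $(G\lor H)^*=G^*\lor H^*$; $(G\rightarrow H)^*=(G^*\rightarrow H^* )\land(G\rightarrow H)$; $(\forall xG)^*=\forall xG^*$; $(\exists xG)^*=\exists xG^*$. For a finite set $\mathbf c$ of object constants, $\mathit{in}_{\mathbf c}(x_1,\dots,x_m)$ denotes $\bigwedge_{1\le j\le m}\bigvee_{c\in\mathbf c}x_j=c$. $\mathbf e_{\mathbf c}$ denotes the list of predicate expressions $\lambda\mathbf x(p_i(\mathbf x)\land\mathit{in}_{\mathbf c}(\mathbf x))$, and $F^*(\mathbf e_{\mathbf c})$ is the result of replacing each atomic part $u_i(\mathbf t)$ of $F^*(\mathbf u)$ by $p_i(\mathbf t)\land\mathit{in}_{\mathbf c}(\mathbf t)$ (renaming bound variables if necessary). Restricted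 variables: $\mathrm{RV}(G)$ for quantifier-free $G$: if $G$ is an equality between two variables, $\mathrm{RV}(G)=\emptyset$; if $G$ is any other atomic formula, $\mathrm{RV}(G)$ is the set of variables occurring in $G$; $\mathrm{RV}(\bot)=\emptyset$; $\mathrm{RV}(G\land H)=\mathrm{RV}(G)\cup\mathrm{RV}(H)$; $\mathrm{RV}(G\lor H)=\mathrm{RV}(G)\cap\mathrm{RV}(H)$; $\mathrm{RV}(G\rightarrow H)=\emptyset$. An occurrence is strictly positive if it is not in the antecedent of any implication. A sentence in prenex form $Q_1x_1\cdots Q_nx_nM$ ($M$ quantifier-free, $x_i$ distinct) is semi-safe if every strictly positive occurrence of every variable $x_i$ in $M$ belongs to a subformula $G\rightarrow H$ of $M$ with $x_i\in\mathrm{RV}(G)$. *)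

theory Defs
  imports Main
begin

datatype trm = Var nat | Cst nat

datatype frm =
    Pred nat "trm list"
  | Eq trm trm
  | Bot
  | And frm frm
  | Or frm frm
  | Imp frm frm
  | All nat frm
  | Ex nat frm

definition Neg :: "frm \<Rightarrow> frm" where "Neg F = Imp F Bot"
definition Top :: frm where "Top = Imp Bot Bot"

fun tvars :: "trm \<Rightarrow> nat set" where
  "tvars (Var x) = {x}" | "tvars (Cst c) = {}"

fun tconsts :: "trm \<Rightarrow> nat set" where
  "tconsts (Var x) = {}" | "tconsts (Cst c) = {c}"

fun fv :: "frm \<Rightarrow> nat set" where
  "fv (Pred p ts) = (\<Union>t\<in>set ts. tvars t)"
| "fv (Eq a b) = tvars a \<union> tvars b"
| "fv Bot = {}"
| "fv (And F G) = fv F \<union> fv G"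
| "fv (Or F G) = fv F \<union> fv G"
| "fv (Imp F G) = fv F \<union> fv G"
| "fv (All x F) = fv F - {x}"
| "fv (Ex x F) = fv F - {x}"

definition sentence :: "frm \<Rightarrow> bool" where "sentence F \<longleftrightarrow> fv F = {}"

fun obj_consts :: "frm \<Rightarrow> nat set" where
  "obj_consts (Pred p ts) = (\<Union>t\<in>set ts. tconsts t)"
| "obj_consts (Eq a b) = tconsts a \<union> tconsts b"
| "obj_consts Bot = {}"
| "obj_consts (And F G) = obj_consts F \<union> obj_consts G"
| "obj_consts (Or F G) = obj_consts F \<union> obj_consts G"
| "obj_consts (Imp F G) = obj_consts F \<union> obj_consts G"
| "obj_consts (All x F) = obj_consts F"
| "obj_consts (Ex x F) = obj_consts F"

fun qfree :: "frm \<Rightarrow> bool" where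
  "qfree (All x F) = False"
| "qfree (Ex x F) = False"
| "qfree (And F G) = (qfree F \<and> qfree G)"
| "qfree (Or F G) = (qfree F \<and> qfree G)"
| "qfree (Imp F G) = (qfree F \<and> qfree G)"
| "qfree _ = True"

text \<open>An interpretation over universe type 'u (types are nonempty):
values of object constants and extensions of predicate constants.\<close>
record 'u interp =
  cval :: "nat \<Rightarrow> 'u"
  pval :: "nat \<Rightarrow> 'u list \<Rightarrow> bool"

fun teval :: "'u interp \<Rightarrow> (nat \<Rightarrow> 'u) \<Rightarrow> trm \<Rightarrow> 'u" where
  "teval I v (Var x) = v x" | "teval I v (Cst c) = cval I c"

fun eval :: "'u interp \<Rightarrow> (nat \<Rightarrow> 'u) \<Rightarrow> frm \<Rightarrow> bool" where
  "eval I v (Pred p ts) = pval I p (map (teval I v) ts)"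
| "eval I v (Eq a b) = (teval I v a = teval I v b)"
| "eval I v Bot = False"
| "eval I v (And F G) = (eval I v F \<and> eval I v G)"
| "eval I v (Or F G) = (eval I v F \<or> eval I v G)"
| "eval I v (Imp F G) = (eval I v F \<longrightarrow> eval I v G)"
| "eval I v (All x F) = (\<forall>d. eval I (v(x := d)) F)"
| "eval I v (Ex x F) = (\<exists>d. eval I (v(x := d)) F)"

definition models :: "'u interp \<Rightarrow> frm \<Rightarrow> bool" where
  "models I F \<longleftrightarrow> (\<forall>v. eval I v F)"

text \<open>Entailment between sentences, over all interpretations with universe 'u;
the theorem is stated for an arbitrary (universally quantified) type 'u.\<close>
definition entails :: "'u itself \<Rightarrow> frm \<Rightarrow> frm \<Rightarrow> bool" where
  "entails _ F G \<longleftrightarrow> (\<forall>I :: 'u interp. models I F \<longrightarrow> models I G)"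

text \<open>\<open>star u F\<close> is F*(u), where the argument u gives, for each predicate constant
p and argument list ts, the formula that u_p(ts) stands for (i.e. the result of
substituting predicate expressions for the predicate variables u).\<close>
fun star :: "(nat \<Rightarrow> trm list \<Rightarrow> frm) \<Rightarrow> frm \<Rightarrow> frm" where
  "star u (Pred p ts) = u p ts"
| "star u (Eq a b) = Eq a b"
| "star u Bot = Bot"
| "star u (And G H) = And (star u G) (star u H)"
| "star u (Or G H) = Or (star u G) (star u H)"
| "star u (Imp G H) = And (Imp (star u G) (star u H)) (Imp G H)"
| "star u (All x G) = All x (star u G)"
| "star u (Ex x G) = Ex x (star u G)"

fun disj :: "frm list \<Rightarrow> frm" where
  "disj [] = Bot" | "disj (F # Fs) = Or F (disj Fs)"

fun conj :: "frm list \<Rightarrow> frm" where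
  "conj [] = Top" | "conj (F # Fs) = And F (conj Fs)"

definition in_c :: "nat set \<Rightarrow> trm list \<Rightarrow> frm" where
  "in_c cs ts = conj (map (\<lambda>t. disj (map (\<lambda>c. Eq t (Cst c)) (sorted_list_of_set cs))) ts)"

definition e_c :: "nat set \<Rightarrow> nat \<Rightarrow> trm list \<Rightarrow> frm" where
  "e_c cs p ts = And (Pred p ts) (in_c cs ts)"

fun RV :: "frm \<Rightarrow> nat set" where
  "RV (Eq (Var x) (Var y)) = {}"
| "RV (Eq a b) = tvars a \<union> tvars b"
| "RV (Pred p ts) = (\<Union>t\<in>set ts. tvars t)"
| "RV Bot = {}"
| "RV (And G H) = RV G \<union> RV H"
| "RV (Or G H) = RV G \<inter> RV H"
| "RV (Imp G H) = {}"
| "RV (All x G) = {}"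
| "RV (Ex x G) = {}"

text \<open>\<open>sp_covered x M\<close>: every strictly positive occurrence of x in the
quantifier-free M belongs to a subformula G \<longrightarrow> H of M with x \<in> RV(G).
(Occurrences in antecedents are not strictly positive, so a strictly positive
occurrence inside G \<longrightarrow> H lies in H.)\<close>
fun sp_covered :: "nat \<Rightarrow> frm \<Rightarrow> bool" where
  "sp_covered x (Pred p ts) = (x \<notin> (\<Union>t\<in>set ts. tvars t))"
| "sp_covered x (Eq a b) = (x \<notin> tvars a \<union> tvars b)"
| "sp_covered x Bot = True"
| "sp_covered x (And G H) = (sp_covered x G \<and> sp_covered x H)"
| "sp_covered x (Or G H) = (sp_covered x G \<and> sp_covered x H)"
| "sp_covered x (Imp G H) = (x \<in> RV G \<or> sp_covered x H)"
| "sp_covered x (All y G) = (x \<noteq> y \<and> sp_covered x G)"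
| "sp_covered x (Ex y G) = (x \<noteq> y \<and> sp_covered x G)"

fun prefix :: "(bool \<times> nat) list \<Rightarrow> frm \<Rightarrow> frm" where
  "prefix [] M = M"
| "prefix ((q, x) # qs) M = (if q then All x (prefix qs M) else Ex x (prefix qs M))"

definition semi_safe :: "frm \<Rightarrow> bool" where
  "semi_safe F \<longleftrightarrow> sentence F \<and>
     (\<exists>qs M. F = prefix qs M \<and> qfree M \<and> distinct (map snd qs) \<and>
        (\<forall>x\<in>set (map snd qs). sp_covered x M))"

end

theory Submission
  imports Defs
begin

text \<open>Write \<open>F = Q M\<close> with \<open>M\<close> quantifier-free; since \<open>(Q M)* = Q M*\<close>, it suffices that
\<open>M\<close> implies \<open>M*(e\<^sub>c)\<close> under every assignment. This is proved by induction on \<open>M\<close>, under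
the invariant that every variable with an uncovered strictly positive occurrence denotes
the value of a constant in \<open>c\<close>; semi-safety says that initially no variable is uncovered.
An atom in strictly positive position then satisfies \<open>in\<^sub>c\<close>. For an implication \<open>G \<rightarrow> H\<close>,
assume \<open>G*(e\<^sub>c)\<close>: it implies \<open>G\<close>, hence \<open>H\<close>, and it forces every \<open>x \<in> RV(G)\<close> to denote
the value of a constant in \<open>c\<close>, which restores the invariant for \<open>H\<close>.\<close>

lemma eval_conj: "eval I v (conj Fs) = (\<forall>F\<in>set Fs. eval I v F)"
  by (induction Fs) (auto simp: Top_def)

lemma eval_disj: "eval I v (disj Fs) = (\<exists>F\<in>set Fs. eval I v F)"
  by (induction Fs) auto

lemma eval_in_c:
  "finite cs \<Longrightarrow> eval I v (in_c cs ts) = (\<forall>t\<in>set ts. teval I v t \<in> cval I ` cs)"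
  by (auto simp: in_c_def eval_conj eval_disj)

lemma eval_star_imp_eval:
  assumes "eval I v (star u G)"
    and "\<And>p ts v. eval I v (u p ts) \<Longrightarrow> eval I v (Pred p ts)"
  shows "eval I v G"
  using assms by (induction G arbitrary: v) auto

lemma eval_star_e_c_imp_eval:
  assumes "eval I v (star (e_c cs) G)"
  shows "eval I v G"
  using assms by (rule eval_star_imp_eval) (simp add: e_c_def)

lemma mem_tvars_iff: "x \<in> tvars t \<longleftrightarrow> t = Var x"
  by (cases t) auto

lemma eval_star_e_c_RV:
  assumes "finite cs" "obj_consts G \<subseteq> cs" "eval I v (star (e_c cs) G)" "x \<in> RV G"
  shows "v x \<in> cval I ` cs"
  using assms
proof (induction G rule: RV.induct)
  case (3 p ts)
  then have "Var x \<in> set ts"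
    by (auto simp: mem_tvars_iff)
  then show ?case
    using 3 by (fastforce simp: e_c_def eval_in_c)
qed (auto simp: mem_tvars_iff intro: rev_image_eqI)

lemma teval_in_cval_image:
  assumes "tconsts t \<subseteq> cs" "\<And>x. x \<in> tvars t \<Longrightarrow> v x \<in> cval I ` cs"
  shows "teval I v t \<in> cval I ` cs"
  using assms by (cases t) auto

lemma eval_star_e_c_qfree:
  assumes "qfree M" "finite cs" "obj_consts M \<subseteq> cs" "eval I v M"
    and "\<And>x. \<not> sp_covered x M \<Longrightarrow> v x \<in> cval I ` cs"
  shows "eval I v (star (e_c cs) M)"
  using assms
proof (induction M)
  case (Pred p ts)
  then have "\<forall>t\<in>set ts. teval I v t \<in> cval I ` cs"
    by (fastforce intro!: teval_in_cval_image)
  then show ?case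
    using Pred by (simp add: e_c_def eval_in_c)
next
  case (And G H)
  have "eval I v (star (e_c cs) G)"
    by (rule And.IH(1)) (use And.prems in simp_all)
  moreover have "eval I v (star (e_c cs) H)"
    by (rule And.IH(2)) (use And.prems in simp_all)
  ultimately show ?case
    by simp
next
  case (Or G H)
  then consider "eval I v G" | "eval I v H"
    by auto
  then show ?case
  proof cases
    case 1
    then have "eval I v (star (e_c cs) G)"
      by (intro Or.IH(1)) (use Or.prems in simp_all)
    then show ?thesis
      by simp
  next
    case 2
    then have "eval I v (star (e_c cs) H)"
      by (intro Or.IH(2)) (use Or.prems in simp_all)
    then show ?thesis
      by simp
  qed
next
  case (Imp G H)
  have "eval I v (star (e_c cs) H)" if G_star: "eval I v (star (e_c cs) G)"
  proof (rule Imp.IH(2))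
    show "eval I v H"
      using Imp.prems(4) G_star eval_star_e_c_imp_eval by auto
    show "v x \<in> cval I ` cs" if "\<not> sp_covered x H" for x
    proof (cases "x \<in> RV G")
      case True
      show ?thesis
        by (rule eval_star_e_c_RV[OF Imp.prems(2) _ G_star True]) (use Imp.prems(3) in simp)
    next
      case False
      with that show ?thesis
        using Imp.prems(5) by simp
    qed
  qed (use Imp.prems(1-3) in simp_all)
  then show ?case
    using Imp.prems(4) by simp
qed simp_all

lemma sp_covered_if_not_fv: "qfree M \<Longrightarrow> x \<notin> fv M \<Longrightarrow> sp_covered x M"
  by (induction M) auto

lemma fv_prefix: "fv (prefix qs M) = fv M - set (map snd qs)"
  by (induction qs M rule: prefix.induct) auto

lemma obj_consts_prefix: "obj_consts (prefix qs M) = obj_consts M"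
  by (induction qs M rule: prefix.induct) simp_all

lemma star_prefix: "star u (prefix qs M) = prefix qs (star u M)"
  by (induction qs M rule: prefix.induct) simp_all

lemma eval_prefix_mono:
  assumes "\<And>v. eval I v M \<Longrightarrow> eval I v M'"
  shows "eval I v (prefix qs M) \<Longrightarrow> eval I v (prefix qs M')"
  using assms by (induction qs M arbitrary: v rule: prefix.induct) fastforce+

lemma semi_safe_prefix_covered:
  assumes "semi_safe F"
  shows "\<exists>qs M. F = prefix qs M \<and> qfree M \<and> (\<forall>x. sp_covered x M)"
proof -
  obtain qs M where F: "F = prefix qs M" "qfree M" "\<forall>x\<in>set (map snd qs). sp_covered x M"
    and closed: "fv F = {}"
    using assms unfolding semi_safe_def sentence_def by blast
  have covered: "sp_covered x M" for x
  proof (cases "x \<in> set (map snd qs)")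
    case False
    then have "x \<notin> fv M"
      using F(1) closed fv_prefix by auto
    then show ?thesis
      using F(2) sp_covered_if_not_fv by blast
  qed (use F in auto)
  with F show ?thesis
    by blast
qed

theorem lemma4:
  fixes F :: frm and cs :: "nat set"
  assumes "semi_safe F"
    and "finite cs"
    and "obj_consts F \<subseteq> cs"
  shows "entails TYPE('u) F (star (e_c cs) F)"
proof -
  obtain qs M where F: "F = prefix qs M" and "qfree M" and covered: "\<And>x. sp_covered x M"
    using semi_safe_prefix_covered[OF assms(1)] by blast
  have "obj_consts M \<subseteq> cs"
    using assms(3) F obj_consts_prefix by simp
  then have M_star: "eval I v (star (e_c cs) M)" if "eval I v M" for I :: "'u interp" and v
    by (rule eval_star_e_c_qfree[OF \<open>qfree M\<close> assms(2) _ that]) (simp_all add: covered)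
  show ?thesis
    unfolding entails_def models_def F star_prefix
    by (intro allI impI) (simp add: eval_prefix_mono[OF M_star])
qed

end
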